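(* Let $\mathbf{C}$ be a finitary adhesive category with a strict initial object $\varnothing$, in which all final pullback complements (FPCs) along monomorphisms exist and monomorphisms are stable under FPCs. Let $\{p_j=(O_j\xleftarrow{}K_j\xrightarrow{}I_j)\}_{j\in\mathcal{J}}$ be a finite family of linear rules and $\{\kappa_j\}_{j\in\mathcal{J}}$ non-zero parameters $\kappa_j\in\mathbb{R}_{\geq 0}$ (base rates). For an object $M$ put $\mathbb{O}^{sq}_M:=\rho^{sq}_{\mathbf{C}}(\delta(M\xleftarrow{id_M}M\xrightarrow{id_M}M))$, and define $$H:=\hat{H}+\bar{H},\qquad \hat{H}:=\sum_{j\in\mathcal{J}}\kappa_j\,\rho^{sq}_{\mathbf{C}}(\delta(p_j)),\qquad \bar{H}:=-\sum_{j\in\mathcal{J}}\kappa_j\,\mathbb{O}^{sq}_{I_j}.$$ Then: (1) $H$ is the infinitesimal generator (Hamiltonian) of a continuous-time Markov chain; namely, writing $H|X\rangle=\sum_Y h_{X,Y}|Y\rangle$ (a finite sum over isomorphism classes $Y$ of objects), one has $h_{X,X}\leq 0$, $h_{X,Y}\geq 0$ for $Y\not\cong X$, and $\sum_Y h_{X,Y}=0$ for every $X$ (equivalently $\langle|H=0$). (2) For every object $M$, $\mathbb{O}^{sq}_M$ is an observable, i.e. a diagonal operator: $\mathbb{O}^{sq}_M|X\rangle=\omega_M(X)|X\rangle$ with $\omega_M(X)\in\mathbb{R}$ for every object $X$ (in fact $\omega_M(X)$ is the number of monomorphisms $M\to X$). (3) (Jump-closure) For every linear rule $p=(O\xleftarrow{o}K\xrightarrow{i}I)\in\mathrm{Lin}(\mathbf{C})$,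 $$\langle|\,\rho^{sq}_{\mathbf{C}}(\delta(p))=\langle|\,\mathbb{O}^{sq}_I.$$
   Context: A category is adhesive if it has pushouts along monomorphisms, has pullbacks, and pushouts along monomorphisms are van Kampen squares; finitary if every object has finitely many subobjects; a strict initial object is an initial object $\varnothing$ such that every morphism $X\to\varnothing$ is an isomorphism. FPC: given $a:A\to B$, $c:B\to C$, a pair $(d:D\to C,b:A\to D)$ is an FPC of $(c,a)$ if $c\circ a=d\circ b$, the square is a pullback, and for all $x:E\to B$, $y:E\to F$, $z:F\to C$, $w:E\to A$ with $(E,x,y)$ a pullback of $(c,z)$ and $a\circ w=x$, there is a unique $w^*:F\to D$ with $d\circ w^*=z$, $w^*\circ y=b\circ w$. The assumption means: for composable monomorphisms $K\xrightarrow{i}I\xrightarrow{m}X$ an FPC of $(m,i)$ exists and consists of monomorphisms. $\mathrm{Lin}(\mathbf{C})$: isomorphism classes of spans of monomorphisms $p=(O\xleftarrow{o}K\xrightarrow{i}I)$. SqPO derivation: $\mathsf{M}_p(X)$ is the set of monomorphisms $m:I\to X$; for such $m$ let $(i':\overline{K}\to X,k:K\to\overline{K})$ be the FPC of $(m,i)$ and let $p_m(X)$ be the pushout of $O\xleftarrow{o}K\xrightarrow{k}\overline{K}$. $\mathcal{R}_{\mathbf{C}}$ is the free $\mathbb{R}$-vector space with basis $\{\delta(p)\mid p\in\mathrm{Lin}(\mathbf{C})\}$. $\hat{\mathbf{C}}$ is the free $\mathbb{R}$-vector space with basis vectors $|X\rangle$ indexed by isomorphism classes of objects. The canonical representation: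 $\rho^{sq}_{\mathbf{C}}(\delta(p))|X\rangle:=\sum_{m\in\mathsf{M}_p(X)}|p_m(X)\rangle$ ($=0$ if $\mathsf{M}_p(X)=\emptyset$), extended linearly. The projection $\langle|$ is the linear functional with $\langle|X\rangle=1$ for every basis vector $|X\rangle$; $\langle|A=\langle|B$ for operators $A,B$ means $\langle|A|X\rangle=\langle|B|X\rangle$ for all $X$. *)

theory Defs
  imports Complex_Main
begin

record ('o, 'a) cat =
  Ob  :: "'o set"
  Ar  :: "'a set"
  Dom :: "'a \<Rightarrow> 'o"
  Cod :: "'a \<Rightarrow> 'o"
  Comp :: "'a \<Rightarrow> 'a \<Rightarrow> 'a"   (* Comp C g f = g o f *)
  Idt :: "'o \<Rightarrow> 'a"

definition is_category :: "('o,'a) cat \<Rightarrow> bool" where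
  "is_category C \<longleftrightarrow>
     (\<forall>f\<in>Ar C. Dom C f \<in> Ob C \<and> Cod C f \<in> Ob C) \<and>
     (\<forall>X\<in>Ob C. Idt C X \<in> Ar C \<and> Dom C (Idt C X) = X \<and> Cod C (Idt C X) = X) \<and>
     (\<forall>f\<in>Ar C. \<forall>g\<in>Ar C. Cod C f = Dom C g \<longrightarrow>
         Comp C g f \<in> Ar C \<and> Dom C (Comp C g f) = Dom C f \<and> Cod C (Comp C g f) = Cod C g) \<and>
     (\<forall>f\<in>Ar C. Comp C f (Idt C (Dom C f)) = f \<and> Comp C (Idt C (Cod C f)) f = f) \<and>
     (\<forall>f\<in>Ar C. \<forall>g\<in>Ar C. \<forall>h\<in>Ar C. Cod C f = Dom C g \<longrightarrow> Cod C g = Dom C h \<longrightarrow>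
         Comp C h (Comp C g f) = Comp C (Comp C h g) f)"

definition hom :: "('o,'a) cat \<Rightarrow> 'o \<Rightarrow> 'o \<Rightarrow> 'a set" where
  "hom C X Y = {f \<in> Ar C. Dom C f = X \<and> Cod C f = Y}"

definition monic :: "('o,'a) cat \<Rightarrow> 'a \<Rightarrow> bool" where
  "monic C m \<longleftrightarrow> m \<in> Ar C \<and>
     (\<forall>f\<in>Ar C. \<forall>g\<in>Ar C. Cod C f = Dom C m \<longrightarrow> Cod C g = Dom C m \<longrightarrow> Dom C f = Dom C g \<longrightarrow>
        Comp C m f = Comp C m g \<longrightarrow> f = g)"

definition isomorphism :: "('o,'a) cat \<Rightarrow> 'a \<Rightarrow> bool" where
  "isomorphism C f \<longleftrightarrow> f \<in> Ar C \<and>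
     (\<exists>g\<in>Ar C. Dom C g = Cod C f \<and> Cod C g = Dom C f \<and>
        Comp C g f = Idt C (Dom C f) \<and> Comp C f g = Idt C (Cod C f))"

definition iso_obj :: "('o,'a) cat \<Rightarrow> 'o \<Rightarrow> 'o \<Rightarrow> bool" where
  "iso_obj C X Y \<longleftrightarrow> X \<in> Ob C \<and> Y \<in> Ob C \<and> (\<exists>f\<in>hom C X Y. isomorphism C f)"

text \<open>Commutative square
    A --a--> B
    |b       |c
    C --d--> D     with c o a = d o b.\<close>
definition comm_sq :: "('o,'a) cat \<Rightarrow> 'a \<Rightarrow> 'a \<Rightarrow> 'a \<Rightarrow> 'a \<Rightarrow> bool" where
  "comm_sq C a b c d \<longleftrightarrow> a \<in> Ar C \<and> b \<in> Ar C \<and> c \<in> Ar C \<and> d \<in> Ar C \<and>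
     Dom C a = Dom C b \<and> Cod C a = Dom C c \<and> Cod C b = Dom C d \<and> Cod C c = Cod C d \<and>
     Comp C c a = Comp C d b"

definition is_pullback :: "('o,'a) cat \<Rightarrow> 'a \<Rightarrow> 'a \<Rightarrow> 'a \<Rightarrow> 'a \<Rightarrow> bool" where
  "is_pullback C a b c d \<longleftrightarrow> comm_sq C a b c d \<and>
     (\<forall>x\<in>Ar C. \<forall>y\<in>Ar C. Dom C x = Dom C y \<longrightarrow> Cod C x = Dom C c \<longrightarrow> Cod C y = Dom C d \<longrightarrow>
        Comp C c x = Comp C d y \<longrightarrow>
        (\<exists>!u. u \<in> Ar C \<and> Dom C u = Dom C x \<and> Cod C u = Dom C a \<and>
              Comp C a u = x \<and> Comp C b u = y))"

definition is_pushout :: "('o,'a) cat \<Rightarrow> 'a \<Rightarrow> 'a \<Rightarrow> 'a \<Rightarrow> 'a \<Rightarrow> bool" where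
  "is_pushout C a b c d \<longleftrightarrow> comm_sq C a b c d \<and>
     (\<forall>x\<in>Ar C. \<forall>y\<in>Ar C. Cod C x = Cod C y \<longrightarrow> Dom C x = Cod C a \<longrightarrow> Dom C y = Cod C b \<longrightarrow>
        Comp C x a = Comp C y b \<longrightarrow>
        (\<exists>!u. u \<in> Ar C \<and> Dom C u = Cod C c \<and> Cod C u = Cod C x \<and>
              Comp C u c = x \<and> Comp C u d = y))"

definition van_kampen :: "('o,'a) cat \<Rightarrow> 'a \<Rightarrow> 'a \<Rightarrow> 'a \<Rightarrow> 'a \<Rightarrow> bool" where
  "van_kampen C a b c d \<longleftrightarrow> is_pushout C a b c d \<and>
     (\<forall>a' b' c' d' \<alpha>A \<alpha>B \<alpha>C \<alpha>D.
        comm_sq C a' b' c' d' \<and>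
        comm_sq C a' \<alpha>A \<alpha>B a \<and> comm_sq C b' \<alpha>A \<alpha>C b \<and>
        comm_sq C c' \<alpha>B \<alpha>D c \<and> comm_sq C d' \<alpha>C \<alpha>D d \<and>
        is_pullback C a' \<alpha>A \<alpha>B a \<and> is_pullback C b' \<alpha>A \<alpha>C b \<longrightarrow>
        (is_pushout C a' b' c' d' \<longleftrightarrow>
           is_pullback C c' \<alpha>B \<alpha>D c \<and> is_pullback C d' \<alpha>C \<alpha>D d))"

definition adhesive :: "('o,'a) cat \<Rightarrow> bool" where
  "adhesive C \<longleftrightarrow>
     (\<forall>c\<in>Ar C. \<forall>d\<in>Ar C. Cod C c = Cod C d \<longrightarrow> (\<exists>a b. is_pullback C a b c d)) \<and>
     (\<forall>a\<in>Ar C. \<forall>b\<in>Ar C. Dom C a = Dom C b \<longrightarrow> (monic C a \<or> monic C b) \<longrightarrow>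
         (\<exists>c d. is_pushout C a b c d)) \<and>
     (\<forall>a b c d. is_pushout C a b c d \<longrightarrow> (monic C a \<or> monic C b) \<longrightarrow> van_kampen C a b c d)"

definition subobj_rel :: "('o,'a) cat \<Rightarrow> 'o \<Rightarrow> ('a \<times> 'a) set" where
  "subobj_rel C X = {(m, m'). monic C m \<and> monic C m' \<and> Cod C m = X \<and> Cod C m' = X \<and>
      (\<exists>h. isomorphism C h \<and> Dom C h = Dom C m \<and> Cod C h = Dom C m' \<and> Comp C m' h = m)}"

definition finitary :: "('o,'a) cat \<Rightarrow> bool" where
  "finitary C \<longleftrightarrow> (\<forall>X\<in>Ob C. finite ({m. monic C m \<and> Cod C m = X} // subobj_rel C X))"

definition strict_initial :: "('o,'a) cat \<Rightarrow> 'o \<Rightarrow> bool" where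
  "strict_initial C Z \<longleftrightarrow> Z \<in> Ob C \<and> (\<forall>X\<in>Ob C. \<exists>!f. f \<in> hom C Z X) \<and>
     (\<forall>X\<in>Ob C. \<forall>f\<in>hom C X Z. isomorphism C f)"

text \<open>Final pullback complement: (d, b) is an FPC of (c, a), where a : A -> B, c : B -> C,
  d : D -> C, b : A -> D.\<close>
definition is_FPC :: "('o,'a) cat \<Rightarrow> 'a \<Rightarrow> 'a \<Rightarrow> 'a \<Rightarrow> 'a \<Rightarrow> bool" where
  "is_FPC C c a d b \<longleftrightarrow> is_pullback C a b c d \<and>
     (\<forall>x y z w. is_pullback C x y c z \<and> w \<in> Ar C \<and> Dom C w = Dom C x \<and> Cod C w = Dom C a \<and>
        Comp C a w = x \<longrightarrow>
        (\<exists>!u. u \<in> Ar C \<and> Dom C u = Cod C y \<and> Cod C u = Dom C d \<and>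
              Comp C d u = z \<and> Comp C u y = Comp C b w))"

definition FPCs_of_monos :: "('o,'a) cat \<Rightarrow> bool" where
  "FPCs_of_monos C \<longleftrightarrow> (\<forall>i m. monic C i \<and> monic C m \<and> Cod C i = Dom C m \<longrightarrow>
      (\<exists>d b. is_FPC C m i d b \<and> monic C d \<and> monic C b))"

text \<open>A linear rule (O <-o- K -i-> I) is represented by the pair (o, i).\<close>
definition linear_rule :: "('o,'a) cat \<Rightarrow> 'a \<times> 'a \<Rightarrow> bool" where
  "linear_rule C r \<longleftrightarrow> monic C (fst r) \<and> monic C (snd r) \<and> Dom C (fst r) = Dom C (snd r)"

definition iso_class :: "('o,'a) cat \<Rightarrow> 'o \<Rightarrow> 'o set" where
  "iso_class C X = {Y \<in> Ob C. iso_obj C Y X}"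

text \<open>Basis vector |X>, as a finitely supported function on isomorphism classes.\<close>
definition ket :: "('o,'a) cat \<Rightarrow> 'o \<Rightarrow> 'o set \<Rightarrow> real" where
  "ket C X = (\<lambda>Y. if Y = iso_class C X then 1 else 0)"

definition matches :: "('o,'a) cat \<Rightarrow> 'a \<times> 'a \<Rightarrow> 'o \<Rightarrow> 'a set" where
  "matches C r X = {m \<in> hom C (Cod C (snd r)) X. monic C m}"

definition fpc_k :: "('o,'a) cat \<Rightarrow> 'a \<Rightarrow> 'a \<Rightarrow> 'a" where
  "fpc_k C m i = snd (SOME db. is_FPC C m i (fst db) (snd db))"

definition po_obj :: "('o,'a) cat \<Rightarrow> 'a \<Rightarrow> 'a \<Rightarrow> 'o" where
  "po_obj C ro k = Cod C (fst (SOME cd. is_pushout C ro k (fst cd) (snd cd)))"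

definition rho :: "('o,'a) cat \<Rightarrow> 'a \<times> 'a \<Rightarrow> 'o \<Rightarrow> 'o set \<Rightarrow> real" where
  "rho C r X = (\<lambda>Y. \<Sum>m\<in>matches C r X. ket C (po_obj C (fst r) (fpc_k C m (snd r))) Y)"

definition Obs :: "('o,'a) cat \<Rightarrow> 'o \<Rightarrow> 'o \<Rightarrow> 'o set \<Rightarrow> real" where
  "Obs C M = rho C (Idt C M, Idt C M)"

definition bra :: "('o set \<Rightarrow> real) \<Rightarrow> real" where
  "bra v = (\<Sum>Y\<in>{Y. v Y \<noteq> 0}. v Y)"

end

theory Submission
  imports Defs
begin

(* Rewriting X with the identity rule of M along a mono m : M -> X gives back X up to isomorphism,
   because the final pullback complement of (m, id_M) and the pushout along id_M are both
   isomorphisms. For a rule p with input I,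
   rho(p) |X> and O_I |X> are sums of the same number of basis vectors, one per match, and <| sends
   every basis vector to 1; this is jump-closure. For H, off-diagonal entries come only from the
   non-negative rho(p_j), the diagonal entry of rho(p_j) |X> is at most the number of matches, which
   is the diagonal entry of O_(I_j) |X>, and <| H = 0 by linearity of <| and jump-closure. *)

lemma ex1_unique: "\<lbrakk>\<exists>!x. P x; P a; P b\<rbrakk> \<Longrightarrow> a = b"
  by blast

lemma monic_in_Ar: "monic C m \<Longrightarrow> m \<in> Ar C"
  by (simp add: monic_def)

lemma fpc_k_is_FPC:
  assumes "FPCs_of_monos C" and "monic C i" and "monic C m" and "Cod C i = Dom C m"
  obtains d where "is_FPC C m i d (fpc_k C m i)"
proof -
  obtain d b where "is_FPC C m i d b"
    using assms unfolding FPCs_of_monos_def by blast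
  then show thesis
    using someI[of "\<lambda>db. is_FPC C m i (fst db) (snd db)" "(d, b)"] that
    unfolding fpc_k_def by simp
qed

lemma po_obj_is_pushout:
  assumes "adhesive C" and "a \<in> Ar C" and "b \<in> Ar C" and "Dom C a = Dom C b" and "monic C a"
  obtains c d where "is_pushout C a b c d" and "po_obj C a b = Cod C c"
proof -
  obtain c d where "is_pushout C a b c d"
    using assms unfolding adhesive_def by blast
  then show thesis
    using someI[of "\<lambda>cd. is_pushout C a b (fst cd) (snd cd)" "(c, d)"] that
    unfolding po_obj_def by simp
qed

lemma bra_eq_sum: "\<lbrakk>finite S; {Y. f Y \<noteq> 0} \<subseteq> S\<rbrakk> \<Longrightarrow> bra f = sum f S"
  unfolding bra_def by (rule sum.mono_neutral_left) auto

lemma bra_ket: "bra (ket C X) = 1"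
proof -
  have "{Y. ket C X Y \<noteq> 0} = {iso_class C X}"
    unfolding ket_def by auto
  then show ?thesis
    unfolding bra_def by (simp add: ket_def)
qed

lemma bra_scale: "bra (\<lambda>Y. c * f Y) = c * bra f"
  unfolding bra_def by (cases "c = 0") (simp_all add: sum_distrib_left)

lemma finite_support_scale:
  fixes f :: "'b \<Rightarrow> real"
  shows "finite {Y. f Y \<noteq> 0} \<Longrightarrow> finite {Y. c * f Y \<noteq> 0}"
  by (rule finite_subset[of _ "{Y. f Y \<noteq> 0}"]) auto

lemma finite_support_diff:
  fixes f g :: "'b \<Rightarrow> real"
  shows "\<lbrakk>finite {Y. f Y \<noteq> 0}; finite {Y. g Y \<noteq> 0}\<rbrakk> \<Longrightarrow> finite {Y. f Y - g Y \<noteq> 0}"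
  by (rule finite_subset[of _ "{Y. f Y \<noteq> 0} \<union> {Y. g Y \<noteq> 0}"]) auto

lemma bra_diff:
  assumes "finite {Y. f Y \<noteq> 0}" and "finite {Y. g Y \<noteq> 0}"
  shows "bra (\<lambda>Y. f Y - g Y) = bra f - bra g"
proof -
  let ?S = "{Y. f Y \<noteq> 0} \<union> {Y. g Y \<noteq> 0}"
  have S: "finite ?S"
    using assms by simp
  have "bra (\<lambda>Y. f Y - g Y) = (\<Sum>Y\<in>?S. f Y - g Y)"
    by (rule bra_eq_sum[OF S]) auto
  also have "\<dots> = sum f ?S - sum g ?S"
    by (rule sum_subtractf)
  also have "\<dots> = bra f - bra g"
    by (simp only: bra_eq_sum[OF S, of f] bra_eq_sum[OF S, of g] Un_upper1 Un_upper2)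
  finally show ?thesis .
qed

lemma support_sum_subset: "{Y. (\<Sum>j\<in>J. f j Y) \<noteq> 0} \<subseteq> (\<Union>j\<in>J. {Y. f j Y \<noteq> 0})"
proof
  fix Y
  assume Y: "Y \<in> {Y. (\<Sum>j\<in>J. f j Y) \<noteq> 0}"
  show "Y \<in> (\<Union>j\<in>J. {Y. f j Y \<noteq> 0})"
  proof (rule ccontr)
    assume "Y \<notin> (\<Union>j\<in>J. {Y. f j Y \<noteq> 0})"
    then have "(\<Sum>j\<in>J. f j Y) = 0"
      by (intro sum.neutral) blast
    with Y show False
      by simp
  qed
qed

lemma finite_support_sum:
  fixes f :: "'j \<Rightarrow> 'b \<Rightarrow> real"
  assumes "finite J" and "\<And>j. j \<in> J \<Longrightarrow> finite {Y. f j Y \<noteq> 0}"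
  shows "finite {Y. (\<Sum>j\<in>J. f j Y) \<noteq> 0}"
  by (rule finite_subset[OF support_sum_subset]) (intro finite_UN_I assms)

lemma bra_sum:
  assumes "finite J" and "\<And>j. j \<in> J \<Longrightarrow> finite {Y. f j Y \<noteq> 0}"
  shows "bra (\<lambda>Y. \<Sum>j\<in>J. f j Y) = (\<Sum>j\<in>J. bra (f j))"
proof -
  let ?S = "\<Union>j\<in>J. {Y. f j Y \<noteq> 0}"
  have S: "finite ?S"
    by (intro finite_UN_I assms)
  have "bra (\<lambda>Y. \<Sum>j\<in>J. f j Y) = (\<Sum>Y\<in>?S. \<Sum>j\<in>J. f j Y)"
    using bra_eq_sum[OF S support_sum_subset] .
  also have "\<dots> = (\<Sum>j\<in>J. \<Sum>Y\<in>?S. f j Y)"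
    by (rule sum.swap)
  also have "\<dots> = (\<Sum>j\<in>J. bra (f j))"
    by (rule sum.cong[OF refl], rule bra_eq_sum[OF S, symmetric]) auto
  finally show ?thesis .
qed

lemma rho_nonneg: "0 \<le> rho C r X Y"
  unfolding rho_def ket_def by (simp add: sum_nonneg)

lemma rho_le_card_matches: "rho C r X Y \<le> real (card (matches C r X))"
proof -
  have "rho C r X Y \<le> (\<Sum>m\<in>matches C r X. 1)"
    unfolding rho_def ket_def by (rule sum_mono) simp
  then show ?thesis
    by simp
qed

lemma finite_support_ket: "finite {Y. ket C X Y \<noteq> 0}"
  unfolding ket_def by simp

lemma finite_support_rho: "finite {Y. rho C r X Y \<noteq> 0}"
proof (cases "finite (matches C r X)")
  case True
  then show ?thesis
    unfolding rho_def by (rule finite_support_sum[OF _ finite_support_ket])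
qed (simp add: rho_def)

lemma bra_rho: "bra (rho C r X) = real (card (matches C r X))"
proof (cases "finite (matches C r X)")
  case True
  then show ?thesis
    unfolding rho_def by (simp add: bra_sum[OF True finite_support_ket] bra_ket)
qed (simp add: rho_def bra_def)

locale category =
  fixes C :: "('o, 'a) cat"
  assumes is_category: "is_category C"
begin

lemma Dom_in_Ob [simp]: "f \<in> Ar C \<Longrightarrow> Dom C f \<in> Ob C"
  and Cod_in_Ob [simp]: "f \<in> Ar C \<Longrightarrow> Cod C f \<in> Ob C"
  using is_category by (simp_all add: is_category_def)

lemma Idt_in_Ar [simp]: "X \<in> Ob C \<Longrightarrow> Idt C X \<in> Ar C"
  and Dom_Idt [simp]: "X \<in> Ob C \<Longrightarrow> Dom C (Idt C X) = X"
  and Cod_Idt [simp]: "X \<in> Ob C \<Longrightarrow> Cod C (Idt C X) = X"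
  using is_category by (simp_all add: is_category_def)

lemma Comp_in_Ar [simp]: "\<lbrakk>f \<in> Ar C; g \<in> Ar C; Cod C f = Dom C g\<rbrakk> \<Longrightarrow> Comp C g f \<in> Ar C"
  and Dom_Comp [simp]: "\<lbrakk>f \<in> Ar C; g \<in> Ar C; Cod C f = Dom C g\<rbrakk> \<Longrightarrow> Dom C (Comp C g f) = Dom C f"
  and Cod_Comp [simp]: "\<lbrakk>f \<in> Ar C; g \<in> Ar C; Cod C f = Dom C g\<rbrakk> \<Longrightarrow> Cod C (Comp C g f) = Cod C g"
  using is_category by (simp_all add: is_category_def)

lemma Comp_Idt_left [simp]: "\<lbrakk>f \<in> Ar C; Cod C f = X\<rbrakk> \<Longrightarrow> Comp C (Idt C X) f = f"
  and Comp_Idt_right [simp]: "\<lbrakk>f \<in> Ar C; Dom C f = X\<rbrakk> \<Longrightarrow> Comp C f (Idt C X) = f"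
  using is_category by (auto simp add: is_category_def)

lemma Comp_assoc:
  "\<lbrakk>f \<in> Ar C; g \<in> Ar C; h \<in> Ar C; Cod C f = Dom C g; Cod C g = Dom C h\<rbrakk>
    \<Longrightarrow> Comp C h (Comp C g f) = Comp C (Comp C h g) f"
  using is_category unfolding is_category_def by blast

lemma monic_Idt: "X \<in> Ob C \<Longrightarrow> monic C (Idt C X)"
  unfolding monic_def by auto

lemma isomorphismI:
  "\<lbrakk>f \<in> Ar C; g \<in> Ar C; Dom C g = Cod C f; Cod C g = Dom C f;
    Comp C g f = Idt C (Dom C f); Comp C f g = Idt C (Cod C f)\<rbrakk> \<Longrightarrow> isomorphism C f"
  unfolding isomorphism_def by blast

lemma isomorphism_Comp:
  assumes f: "isomorphism C f" and g: "isomorphism C g" and fg: "Cod C f = Dom C g"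
  shows "isomorphism C (Comp C g f)"
proof -
  obtain f' where f': "f \<in> Ar C" "f' \<in> Ar C" "Dom C f' = Cod C f" "Cod C f' = Dom C f"
    and f'f: "Comp C f' f = Idt C (Dom C f)" and ff': "Comp C f f' = Idt C (Cod C f)"
    using f unfolding isomorphism_def by blast
  obtain g' where g': "g \<in> Ar C" "g' \<in> Ar C" "Dom C g' = Cod C g" "Cod C g' = Dom C g"
    and g'g: "Comp C g' g = Idt C (Dom C g)" and gg': "Comp C g g' = Idt C (Cod C g)"
    using g unfolding isomorphism_def by blast
  have "Comp C (Comp C f' g') (Comp C g f) = Comp C f' (Comp C g' (Comp C g f))"
    by (rule Comp_assoc[symmetric]) (use f' g' fg in simp_all)
  also have "Comp C g' (Comp C g f) = Comp C (Comp C g' g) f"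
    by (rule Comp_assoc) (use f' g' fg in simp_all)
  finally have left: "Comp C (Comp C f' g') (Comp C g f) = Idt C (Dom C f)"
    using f' g' fg f'f g'g by simp
  have "Comp C (Comp C g f) (Comp C f' g') = Comp C g (Comp C f (Comp C f' g'))"
    by (rule Comp_assoc[symmetric]) (use f' g' fg in simp_all)
  also have "Comp C f (Comp C f' g') = Comp C (Comp C f f') g'"
    by (rule Comp_assoc) (use f' g' fg in simp_all)
  finally have right: "Comp C (Comp C g f) (Comp C f' g') = Idt C (Cod C g)"
    using f' g' fg ff' gg' by simp
  have "Comp C g f \<in> Ar C" "Comp C f' g' \<in> Ar C"
    "Dom C (Comp C f' g') = Cod C (Comp C g f)" "Cod C (Comp C f' g') = Dom C (Comp C g f)"
    "Dom C (Comp C g f) = Dom C f" "Cod C (Comp C g f) = Cod C g"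
    using f' g' fg by simp_all
  then show ?thesis
    using isomorphismI[of "Comp C g f" "Comp C f' g'"] left right by metis
qed

lemma iso_obj_sym: "iso_obj C X Y \<Longrightarrow> iso_obj C Y X"
  unfolding iso_obj_def hom_def isomorphism_def by auto

lemma iso_obj_trans:
  assumes "iso_obj C X Y" and "iso_obj C Y Z"
  shows "iso_obj C X Z"
proof -
  obtain f g where f: "f \<in> hom C X Y" "isomorphism C f" and g: "g \<in> hom C Y Z" "isomorphism C g"
    using assms unfolding iso_obj_def by blast
  then have "Comp C g f \<in> hom C X Z" "isomorphism C (Comp C g f)"
    by (auto simp: hom_def intro: isomorphism_Comp)
  then show ?thesis
    using assms unfolding iso_obj_def by blast
qed

lemma iso_class_Dom_eq_Cod:
  assumes "isomorphism C f"
  shows "iso_class C (Dom C f) = iso_class C (Cod C f)"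
proof -
  have iso: "iso_obj C (Dom C f) (Cod C f)"
    using assms unfolding iso_obj_def hom_def isomorphism_def by auto
  show ?thesis
    unfolding iso_class_def using iso_obj_trans[OF _ iso] iso_obj_trans[OF _ iso_obj_sym[OF iso]] by blast
qed

lemma is_pullback_Idt_Idt:
  assumes f: "f \<in> Ar C"
  shows "is_pullback C (Idt C (Dom C f)) f f (Idt C (Cod C f))"
  unfolding is_pullback_def
proof (intro conjI ballI impI)
  fix x y
  assume "x \<in> Ar C" "y \<in> Ar C" "Dom C x = Dom C y" "Cod C x = Dom C f"
    "Cod C y = Dom C (Idt C (Cod C f))" "Comp C f x = Comp C (Idt C (Cod C f)) y"
  then show "\<exists>!u. u \<in> Ar C \<and> Dom C u = Dom C x \<and> Cod C u = Dom C (Idt C (Dom C f)) \<and>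
      Comp C (Idt C (Dom C f)) u = x \<and> Comp C f u = y"
    using f by (intro ex1I[of _ x]) (simp, elim conjE, simp)
qed (use f in \<open>simp add: comm_sq_def\<close>)

lemma comm_sq_if_is_pullback: "is_pullback C a b c d \<Longrightarrow> comm_sq C a b c d"
  by (simp add: is_pullback_def)

lemma comm_sq_if_is_pushout: "is_pushout C a b c d \<Longrightarrow> comm_sq C a b c d"
  by (simp add: is_pushout_def)


lemma FPC_along_Idt_isomorphism:
  assumes m: "m \<in> Ar C" and F: "is_FPC C m (Idt C (Dom C m)) d b"
  shows "isomorphism C d"
proof -
  define M where "M = Dom C m"
  have M: "M \<in> Ob C" and F: "is_FPC C m (Idt C M) d b"
    using m F unfolding M_def by simp_all
  then have pb: "is_pullback C (Idt C M) b m d"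
    unfolding is_FPC_def by simp
  then have b: "b \<in> Ar C" "Dom C b = M" and d: "d \<in> Ar C" "Dom C d = Cod C b" "Cod C d = Cod C m"
    and db: "Comp C d b = m"
    using comm_sq_if_is_pullback[OF pb] m unfolding comm_sq_def M_def by auto
  have mediate: "\<exists>!u. u \<in> Ar C \<and> Dom C u = Cod C y \<and> Cod C u = Dom C d \<and>
      Comp C d u = z \<and> Comp C u y = b"
    if "is_pullback C (Idt C M) y m z" for y z
    using F[unfolded is_FPC_def, THEN conjunct2, rule_format, of "Idt C M" y z "Idt C M"] that M b
    by simp
  obtain u where u: "u \<in> Ar C" "Dom C u = Cod C m" "Cod C u = Dom C d"
    and du: "Comp C d u = Idt C (Cod C m)" and um: "Comp C u m = b"
    using mediate[OF is_pullback_Idt_Idt[OF m, folded M_def]] by auto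
  \<comment> \<open>Both \<open>u \<circ> d\<close> and the identity mediate the FPC's own pullback square.\<close>
  have "Comp C d (Comp C u d) = Comp C (Comp C d u) d"
    using u d by (simp add: Comp_assoc)
  moreover have "Comp C (Comp C u d) b = Comp C u (Comp C d b)"
    using u d b by (simp add: Comp_assoc)
  ultimately have "Comp C u d = Idt C (Dom C d)"
    by (intro ex1_unique[OF mediate[OF pb]]) (use u d b du db um in simp_all)
  then show ?thesis
    by (intro isomorphismI[of d u]) (use u d du in simp_all)
qed

lemma pushout_along_Idt_isomorphism:
  assumes k: "k \<in> Ar C" and P: "is_pushout C (Idt C (Dom C k)) k c d"
  shows "isomorphism C d"
proof -
  have c: "c \<in> Ar C" "Dom C c = Dom C k" and d: "d \<in> Ar C" "Dom C d = Cod C k" "Cod C d = Cod C c"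
    and dk: "Comp C d k = c"
    using comm_sq_if_is_pushout[OF P] k unfolding comm_sq_def by auto
  have mediate: "\<exists>!u. u \<in> Ar C \<and> Dom C u = Cod C c \<and> Cod C u = Cod C x \<and>
      Comp C u c = x \<and> Comp C u d = y"
    if "y \<in> Ar C" "Dom C y = Cod C k" "x = Comp C y k" for x y
    using P[unfolded is_pushout_def, THEN conjunct2, rule_format, of x y] that k by simp
  obtain u where u: "u \<in> Ar C" "Dom C u = Cod C c" "Cod C u = Cod C k"
    and uc: "Comp C u c = k" and ud: "Comp C u d = Idt C (Cod C k)"
    using mediate[of "Idt C (Cod C k)" k] k by auto
  \<comment> \<open>Both \<open>d \<circ> u\<close> and the identity mediate the pushout square itself.\<close>
  have "Comp C (Comp C d u) c = Comp C d (Comp C u c)"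
    using u c d by (simp add: Comp_assoc)
  moreover have "Comp C (Comp C d u) d = Comp C d (Comp C u d)"
    using u d by (simp add: Comp_assoc)
  ultimately have "Comp C d u = Idt C (Cod C c)"
    by (intro ex1_unique[OF mediate[OF d(1,2) dk[symmetric]]]) (use u c d dk uc ud in simp_all)
  then show ?thesis
    by (intro isomorphismI[of d u]) (use u c d ud in simp_all)
qed

lemma iso_class_po_obj_Idt_rule:
  assumes adh: "adhesive C" and fpc: "FPCs_of_monos C" and m: "monic C m" and M: "Dom C m = M"
  shows "iso_class C (po_obj C (Idt C M) (fpc_k C m (Idt C M))) = iso_class C (Cod C m)"
proof -
  define k where "k = fpc_k C m (Idt C M)"
  have m_Ar: "m \<in> Ar C" and M_Ob: "M \<in> Ob C"
    using monic_in_Ar[OF m] M by auto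
  obtain d where F: "is_FPC C m (Idt C M) d k"
    using fpc_k_is_FPC[OF fpc monic_Idt[OF M_Ob] m] M_Ob M unfolding k_def by auto
  then have k: "k \<in> Ar C" "Dom C k = M" and d: "Dom C d = Cod C k" "Cod C d = Cod C m"
    using comm_sq_if_is_pullback[OF F[unfolded is_FPC_def, THEN conjunct1]] M_Ob
    unfolding comm_sq_def by auto
  obtain c d' where P: "is_pushout C (Idt C M) k c d'" and po: "po_obj C (Idt C M) k = Cod C c"
    using po_obj_is_pushout[OF adh _ k(1) _ monic_Idt[OF M_Ob]] M_Ob k by auto
  have d': "Dom C d' = Cod C k" "Cod C d' = Cod C c"
    using comm_sq_if_is_pushout[OF P] unfolding comm_sq_def by auto
  have "iso_class C (Cod C m) = iso_class C (Cod C k)"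
    using iso_class_Dom_eq_Cod[OF FPC_along_Idt_isomorphism[OF m_Ar F[folded M]]] d by simp
  also have "\<dots> = iso_class C (Cod C c)"
    using iso_class_Dom_eq_Cod[OF pushout_along_Idt_isomorphism[OF k(1) P[folded k(2)]]] d' by simp
  finally show ?thesis
    unfolding k_def[symmetric] po by simp
qed

lemma Obs_eq_count_monos:
  assumes "adhesive C" and "FPCs_of_monos C" and M: "M \<in> Ob C"
  shows "Obs C M X = (\<lambda>Y. real (card {m \<in> hom C M X. monic C m}) * ket C X Y)"
proof
  fix Y
  have "matches C (Idt C M, Idt C M) X = {m \<in> hom C M X. monic C m}"
    unfolding matches_def using M by simp
  then have "Obs C M X Y =
      (\<Sum>m\<in>{m \<in> hom C M X. monic C m}. ket C (po_obj C (Idt C M) (fpc_k C m (Idt C M))) Y)"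
    unfolding Obs_def rho_def by simp
  also have "\<dots> = (\<Sum>m\<in>{m \<in> hom C M X. monic C m}. ket C X Y)"
  proof (rule sum.cong[OF refl])
    fix m
    assume "m \<in> {m \<in> hom C M X. monic C m}"
    then have "iso_class C (po_obj C (Idt C M) (fpc_k C m (Idt C M))) = iso_class C X"
      using iso_class_po_obj_Idt_rule[OF assms(1,2)] by (auto simp: hom_def)
    then show "ket C (po_obj C (Idt C M) (fpc_k C m (Idt C M))) Y = ket C X Y"
      unfolding ket_def by simp
  qed
  finally show "Obs C M X Y = real (card {m \<in> hom C M X. monic C m}) * ket C X Y"
    by simp
qed

lemma bra_rho_eq_bra_Obs:
  assumes "linear_rule C r"
  shows "bra (rho C r X) = bra (Obs C (Cod C (snd r)) X)"
proof -
  have "Cod C (snd r) \<in> Ob C"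
    using assms monic_in_Ar[of C "snd r"] unfolding linear_rule_def by simp
  then show ?thesis
    unfolding Obs_def bra_rho matches_def by simp
qed

lemma Hamiltonian_is_generator:
  fixes p :: "'j \<Rightarrow> 'a \<times> 'a" and \<kappa> :: "'j \<Rightarrow> real" and X :: 'o
  assumes adh: "adhesive C" and fpc: "FPCs_of_monos C" and J: "finite J"
    and rules: "\<forall>j\<in>J. linear_rule C (p j)" and rates: "\<forall>j\<in>J. \<kappa> j \<ge> 0"
  defines "h \<equiv> \<lambda>Y. (\<Sum>j\<in>J. \<kappa> j * rho C (p j) X Y) - (\<Sum>j\<in>J. \<kappa> j * Obs C (Cod C (snd (p j))) X Y)"
  shows "finite {Y. h Y \<noteq> 0}" and "h (iso_class C X) \<le> 0"
    and "\<And>Y. Y \<noteq> iso_class C X \<Longrightarrow> h Y \<ge> 0" and "bra h = 0"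
proof -
  define I where "I j = Cod C (snd (p j))" for j
  have h: "h = (\<lambda>Y. (\<Sum>j\<in>J. \<kappa> j * rho C (p j) X Y) - (\<Sum>j\<in>J. \<kappa> j * Obs C (I j) X Y))"
    unfolding h_def I_def ..
  have I: "I j \<in> Ob C" if "j \<in> J" for j
    using rules that monic_in_Ar[of C "snd (p j)"] unfolding I_def linear_rule_def by simp
  have Obs: "Obs C (I j) X Y = real (card (matches C (p j) X)) * ket C X Y" if "j \<in> J" for j Y
    using Obs_eq_count_monos[OF adh fpc I[OF that]] unfolding matches_def I_def by simp
  have supp_rho: "finite {Y. \<kappa> j * rho C (p j) X Y \<noteq> 0}" for j
    by (rule finite_support_scale[OF finite_support_rho])
  have supp_Obs: "finite {Y. \<kappa> j * Obs C (I j) X Y \<noteq> 0}" for j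
    unfolding Obs_def by (rule finite_support_scale[OF finite_support_rho])
  have supp: "finite {Y. (\<Sum>j\<in>J. \<kappa> j * rho C (p j) X Y) \<noteq> 0}"
    "finite {Y. (\<Sum>j\<in>J. \<kappa> j * Obs C (I j) X Y) \<noteq> 0}"
    by (rule finite_support_sum[OF J supp_rho], rule finite_support_sum[OF J supp_Obs])
  show "finite {Y. h Y \<noteq> 0}"
    unfolding h by (rule finite_support_diff[OF supp])
  have "\<kappa> j * rho C (p j) X (iso_class C X) \<le> \<kappa> j * Obs C (I j) X (iso_class C X)" if "j \<in> J" for j
  proof -
    have "\<kappa> j * rho C (p j) X (iso_class C X) \<le> \<kappa> j * real (card (matches C (p j) X))"
      using rates that by (intro mult_left_mono rho_le_card_matches) simp
    then show ?thesis
      using Obs[OF that] by (simp add: ket_def)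
  qed
  then show "h (iso_class C X) \<le> 0"
    unfolding h by (simp add: sum_mono)
  show "h Y \<ge> 0" if "Y \<noteq> iso_class C X" for Y
  proof -
    have "Obs C (I j) X Y = 0" if "j \<in> J" for j
      using Obs[OF that] \<open>Y \<noteq> iso_class C X\<close> by (simp add: ket_def)
    then show ?thesis
      unfolding h using rates by (simp add: sum_nonneg rho_nonneg)
  qed
  have "bra h = (\<Sum>j\<in>J. \<kappa> j * bra (rho C (p j) X)) - (\<Sum>j\<in>J. \<kappa> j * bra (Obs C (I j) X))"
    unfolding h bra_diff[OF supp] bra_sum[OF J supp_rho] bra_sum[OF J supp_Obs] bra_scale ..
  also have "\<dots> = 0"
    using rules by (simp add: bra_rho_eq_bra_Obs I_def)
  finally show "bra h = 0" .
qed

end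

theorem mainTheorem5:
  fixes C :: "('o,'a) cat" and J :: "'j set" and p :: "'j \<Rightarrow> 'a \<times> 'a" and \<kappa> :: "'j \<Rightarrow> real"
    and H :: "'o \<Rightarrow> 'o set \<Rightarrow> real"
  assumes cat: "is_category C"
    and adh: "adhesive C"
    and fin: "finitary C"
    and init: "\<exists>Z. strict_initial C Z"
    and fpc: "FPCs_of_monos C"
    and J_fin: "finite J"
    and rules: "\<forall>j\<in>J. linear_rule C (p j)"
    and rates: "\<forall>j\<in>J. \<kappa> j > 0"
    and H_def: "H \<equiv> (\<lambda>X Y. (\<Sum>j\<in>J. \<kappa> j * rho C (p j) X Y)
                          - (\<Sum>j\<in>J. \<kappa> j * Obs C (Cod C (snd (p j))) X Y))"
  shows "(\<forall>X\<in>Ob C. finite {Y. H X Y \<noteq> 0} \<and> H X (iso_class C X) \<le> 0 \<and>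
              (\<forall>Y. Y \<noteq> iso_class C X \<longrightarrow> H X Y \<ge> 0) \<and> bra (H X) = 0)
       \<and> (\<forall>M\<in>Ob C. \<forall>X\<in>Ob C.
              Obs C M X = (\<lambda>Y. real (card {m \<in> hom C M X. monic C m}) * ket C X Y))
       \<and> (\<forall>r. linear_rule C r \<longrightarrow>
              (\<forall>X\<in>Ob C. bra (rho C r X) = bra (Obs C (Cod C (snd r)) X)))"
proof -
  interpret category C
    by (rule category.intro) (rule cat)
  have "\<forall>j\<in>J. \<kappa> j \<ge> 0"
    using rates by auto
  note generator = Hamiltonian_is_generator[OF adh fpc J_fin rules this]
  show ?thesis
    unfolding H_def
    by (intro conjI ballI allI impI generator Obs_eq_count_monos[OF adh fpc] bra_rho_eq_bra_Obs)
      assumption+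
qed

end
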